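(* In the model described in the context, for every number of users $N\in\mathbb{N}$, $$\Delta C(N)\le \frac{1}{T}\sum_{t=0}^{T-1}\sum_{m=1}^{M}S(m)\sum_{n\in\mathcal{B}_t(m)}\mathbb{E}\bigl[I_{n,t}(m)\,C'(L_t)-C'(L_{t-1})\bigr].$$
   Context: There are $N$ users, $M$ data items and a period of $T$ time slots. Item $m\in\{1,\dots,M\}$ has size $S(m)>0$. For each user $n$ and slot $t$ there is a demand profile $\mathbf{P}_{n,t}=(P_{n,t}(m))_{m=1}^M$ with $P_{n,t}(m)\ge 0$ and $\sum_m P_{n,t}(m)\le 1$. The profiles are periodic: $\mathbf{P}_{n,t}=\mathbf{P}_{n,t+kT}$ for all integers $k\ge 0$. The demand is modeled by $\{0,1\}$-valued random variables $I_{n,t}(m)$ with $\Pr(I_{n,t}(m)=1)=P_{n,t}(m)$ and $\sum_m I_{n,t}(m)\le 1$ (each user requests at most one item per slot). For $n\neq k$, $(I_{n,t}(m))_m$ is independent of $(I_{k,t}(j))_j$. The non-proactive load is $L_t=\sum_{m=1}^M\sum_{n=1}^N S(m)I_{n,t}(m)$. The cost function $C:\mathbb{R}_+\to\mathbb{R}_+$ is smooth, strictly convex and monotonically increasing, with derivative $C'$. Slot indices are taken modulo $T$, so $L_{-1}$ stands for $L_{T-1}$ and $x_{n,T}=x_{n,0}$. The non-proactive cost is $C^{\mathcal N}(N)=\frac1T\sum_{t=0}^{T-1}\mathbb{E}[C(L_t)]$. The proactive cost is $$C^{\mathcal P}(N)=\min_{\mathbf{x}}\ \frac1T\sum_{t=0}^{T-1}\mathbb{E}\Bigl[C\Bigl(L_t+\sum_{m=1}^M\sum_{n=1}^N\bigl(x_{n,t+1}(m)-x_{n,t}(m)I_{n,t}(m)\bigr)\Bigr)\Bigr],$$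 minimized over proactive downloads $x_{n,t}(m)$ subject to $0\le x_{n,t}(m)\le S(m)$ for all $m,n$ and $t=0,\dots,T-1$, and $x_{n,0}=x_{n,T}$. Here $x_{n,t+1}(m)$ is the portion of item $m$ sent to user $n$ in slot $t$ ahead of slot $t+1$. The cost reduction is $\Delta C(N)=C^{\mathcal N}(N)-C^{\mathcal P}(N)$. The set of active users for item $m$ at slot $t$ is $\mathcal{B}_t(m)=\{n:\mathbb{E}[I_{n,t}(m)C'(L_t)-C'(L_{t-1})]>0\}$. *)

theory Defs
  imports "HOL-Probability.Probability"
begin

text \<open>Users are indexed by n < N, items by m in {1..M}, slots by t < T.
  Slot indices are taken modulo T.\<close>

definition prev_slot :: "nat \<Rightarrow> nat \<Rightarrow> nat" where
  "prev_slot T t = (t + T - 1) mod T"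

definition next_slot :: "nat \<Rightarrow> nat \<Rightarrow> nat" where
  "next_slot T t = (t + 1) mod T"

definition load :: "nat \<Rightarrow> nat \<Rightarrow> (nat \<Rightarrow> real) \<Rightarrow> (nat \<Rightarrow> nat \<Rightarrow> nat \<Rightarrow> 'a \<Rightarrow> real)
    \<Rightarrow> nat \<Rightarrow> 'a \<Rightarrow> real" where
  "load N M S I t \<omega> = (\<Sum>m=1..M. \<Sum>n<N. S m * I n t m \<omega>)"

definition strictly_convex_on :: "real set \<Rightarrow> (real \<Rightarrow> real) \<Rightarrow> bool" where
  "strictly_convex_on A f \<longleftrightarrow> convex A \<and> (\<forall>x\<in>A. \<forall>y\<in>A. x \<noteq> y \<longrightarrow>
     (\<forall>u::real. 0 < u \<and> u < 1 \<longrightarrow> f (u * x + (1 - u) * y) < u * f x + (1 - u) * f y))"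

definition cost_nonproactive :: "'a measure \<Rightarrow> nat \<Rightarrow> nat \<Rightarrow> nat \<Rightarrow> (nat \<Rightarrow> real)
    \<Rightarrow> (nat \<Rightarrow> nat \<Rightarrow> nat \<Rightarrow> 'a \<Rightarrow> real) \<Rightarrow> (real \<Rightarrow> real) \<Rightarrow> real" where
  "cost_nonproactive Pr N M T S I C =
     (1 / real T) * (\<Sum>t<T. integral\<^sup>L Pr (\<lambda>\<omega>. C (load N M S I t \<omega>)))"

text \<open>Feasible proactive download policies x n t m, for n < N, t < T, m in {1..M};
  the value x_{n,T} is identified with x_{n,0} via next_slot.\<close>
definition feasible_policy :: "nat \<Rightarrow> nat \<Rightarrow> nat \<Rightarrow> (nat \<Rightarrow> real) \<Rightarrow> (nat \<Rightarrow> nat \<Rightarrow> nat \<Rightarrow> real) \<Rightarrow> bool" where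
  "feasible_policy N M T S x \<longleftrightarrow>
     (\<forall>n<N. \<forall>t<T. \<forall>m\<in>{1..M}. 0 \<le> x n t m \<and> x n t m \<le> S m)"

definition proactive_objective :: "'a measure \<Rightarrow> nat \<Rightarrow> nat \<Rightarrow> nat \<Rightarrow> (nat \<Rightarrow> real)
    \<Rightarrow> (nat \<Rightarrow> nat \<Rightarrow> nat \<Rightarrow> 'a \<Rightarrow> real) \<Rightarrow> (real \<Rightarrow> real) \<Rightarrow> (nat \<Rightarrow> nat \<Rightarrow> nat \<Rightarrow> real) \<Rightarrow> real" where
  "proactive_objective Pr N M T S I C x =
     (1 / real T) * (\<Sum>t<T. integral\<^sup>L Pr (\<lambda>\<omega>. C (load N M S I t \<omega>
        + (\<Sum>m=1..M. \<Sum>n<N. x n (next_slot T t) m - x n t m * I n t m \<omega>))))"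

text \<open>Proactive cost C^P(N): the minimum (infimum; it is attained) over feasible policies.\<close>
definition cost_proactive :: "'a measure \<Rightarrow> nat \<Rightarrow> nat \<Rightarrow> nat \<Rightarrow> (nat \<Rightarrow> real)
    \<Rightarrow> (nat \<Rightarrow> nat \<Rightarrow> nat \<Rightarrow> 'a \<Rightarrow> real) \<Rightarrow> (real \<Rightarrow> real) \<Rightarrow> real" where
  "cost_proactive Pr N M T S I C =
     Inf (proactive_objective Pr N M T S I C ` {x. feasible_policy N M T S x})"

definition cost_reduction :: "'a measure \<Rightarrow> nat \<Rightarrow> nat \<Rightarrow> nat \<Rightarrow> (nat \<Rightarrow> real)
    \<Rightarrow> (nat \<Rightarrow> nat \<Rightarrow> nat \<Rightarrow> 'a \<Rightarrow> real) \<Rightarrow> (real \<Rightarrow> real) \<Rightarrow> real" where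
  "cost_reduction Pr N M T S I C =
     cost_nonproactive Pr N M T S I C - cost_proactive Pr N M T S I C"

definition gain :: "'a measure \<Rightarrow> nat \<Rightarrow> nat \<Rightarrow> nat \<Rightarrow> (nat \<Rightarrow> real)
    \<Rightarrow> (nat \<Rightarrow> nat \<Rightarrow> nat \<Rightarrow> 'a \<Rightarrow> real) \<Rightarrow> (real \<Rightarrow> real) \<Rightarrow> nat \<Rightarrow> nat \<Rightarrow> nat \<Rightarrow> real" where
  "gain Pr N M T S I C' n t m =
     integral\<^sup>L Pr (\<lambda>\<omega>. I n t m \<omega> * C' (load N M S I t \<omega>)
                          - C' (load N M S I (prev_slot T t) \<omega>))"

definition active_users :: "'a measure \<Rightarrow> nat \<Rightarrow> nat \<Rightarrow> nat \<Rightarrow> (nat \<Rightarrow> real)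
    \<Rightarrow> (nat \<Rightarrow> nat \<Rightarrow> nat \<Rightarrow> 'a \<Rightarrow> real) \<Rightarrow> (real \<Rightarrow> real) \<Rightarrow> nat \<Rightarrow> nat \<Rightarrow> nat set" where
  "active_users Pr N M T S I C' t m = {n. n < N \<and> gain Pr N M T S I C' n t m > 0}"

end

theory Submission
  imports Defs
begin

text \<open>For a feasible policy \<open>x\<close>, the tangent inequality \<open>C (L + d) \<ge> C L + C' L * d\<close> of the
  convex cost, taken in expectation, bounds the proactive objective from below by the
  non-proactive cost minus \<open>1/T\<close> times \<open>\<Sum> x n t m * E[I n t m * C' (L t) - C' (L (t - 1))]\<close>:
  the portion \<open>x n (t + 1) m\<close> sent in slot \<open>t\<close> is charged at \<open>C' (L t)\<close>, and the cyclic shift of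
  the slot index charges \<open>x n t m\<close> at \<open>C' (L (t - 1))\<close>. As \<open>0 \<le> x n t m \<le> S m\<close>, the subtracted
  sum is at most \<open>S m\<close> times the sum of the positive gains, i.e. those of the active users.\<close>

text \<open>Unlike \<open>convex_on_imp_above_tangent\<close>, the point \<open>c\<close> may lie on the boundary of \<open>A\<close>
  (a load can be \<open>0\<close>): only the one-sided difference quotient towards \<open>x\<close> is used.\<close>

lemma convex_on_above_tangent_within:
  fixes f :: "real \<Rightarrow> real"
  assumes convex: "convex_on A f" and c: "c \<in> A" and x: "x \<in> A"
    and deriv: "(f has_real_derivative f') (at c within A)"
  shows "f' * (x - c) \<le> f x - f c"
proof (cases "x = c")
  case True
  then show ?thesis by simp
next
  case False
  define g where "g s = (1 - s) * c + s * x" for s :: real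
  have g_in_A: "g s \<in> A" if "0 \<le> s" "s \<le> 1" for s
    using convexD[OF convex_on_imp_convex[OF convex] c x, of "1 - s" s] that
    by (simp add: g_def)
  have below_chord: "(f (g s) - f c) / (g s - c) * (x - c) \<le> f x - f c"
    if "0 < s" "s < 1" for s
  proof -
    have "f (g s) - f c \<le> s * (f x - f c)"
      using convex_onD[OF convex, of s c x] that c x by (simp add: g_def algebra_simps)
    then have "(f (g s) - f c) / s \<le> f x - f c"
      using that by (simp add: pos_divide_le_eq mult.commute)
    moreover have "(f (g s) - f c) / (g s - c) * (x - c) = (f (g s) - f c) / s"
      using False that by (simp add: g_def field_simps)
    ultimately show ?thesis by simp
  qed
  have near_0: "eventually (\<lambda>s. 0 < s \<and> s < 1) (at_right (0::real))"
    by (rule eventually_at_rightI[of 0 1]) auto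
  have g_approaches_c: "filterlim g (at c within A) (at_right 0)"
  proof (subst filterlim_at, intro conjI)
    show "eventually (\<lambda>s. g s \<in> A \<and> g s \<noteq> c) (at_right 0)"
      using near_0 by eventually_elim (use False g_in_A in \<open>auto simp: g_def algebra_simps\<close>)
    show "(g \<longlongrightarrow> c) (at_right 0)"
      unfolding g_def by (auto intro!: tendsto_eq_intros)
  qed
  have "((\<lambda>s. (f (g s) - f c) / (g s - c) * (x - c)) \<longlongrightarrow> f' * (x - c)) (at_right 0)"
    using deriv unfolding has_field_derivative_iff
    by (intro tendsto_mult tendsto_const filterlim_compose[OF _ g_approaches_c])
  moreover have "eventually (\<lambda>s. (f (g s) - f c) / (g s - c) * (x - c) \<le> f x - f c) (at_right 0)"
    using near_0 by eventually_elim (use below_chord in auto)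
  ultimately show ?thesis
    by (rule tendsto_upperbound) simp
qed

lemma strictly_convex_on_imp_convex_on:
  assumes "strictly_convex_on A f"
  shows "convex_on A f"
proof (rule convex_onI)
  show "convex A"
    using assms by (simp add: strictly_convex_on_def)
  fix u x y :: real
  assume u: "0 < u" "u < 1" and xy: "x \<in> A" "y \<in> A"
  show "f ((1 - u) *\<^sub>R x + u *\<^sub>R y) \<le> (1 - u) * f x + u * f y"
  proof (cases "x = y")
    case True
    then show ?thesis by (simp add: algebra_simps)
  next
    case False
    then have "\<forall>v. 0 < v \<and> v < 1 \<longrightarrow> f (v * x + (1 - v) * y) < v * f x + (1 - v) * f y"
      using assms xy unfolding strictly_convex_on_def by blast
    then show ?thesis
      using u by (auto dest: spec[of _ "1 - u"])
  qed
qed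

lemma borel_measurable_continuous_on_comp:
  assumes "continuous_on A f" and "g \<in> borel_measurable M" and "\<And>\<omega>. \<omega> \<in> space M \<Longrightarrow> g \<omega> \<in> A"
  shows "(\<lambda>\<omega>. f (g \<omega>)) \<in> borel_measurable M"
  using measurable_compose[OF measurable_restrict_space2 borel_measurable_continuous_on_restrict]
    assms by blast

lemma (in finite_measure) integrable_mult_continuous_on_comp:
  fixes f :: "real \<Rightarrow> real"
  assumes f: "continuous_on K f" and K: "compact K"
    and g: "g \<in> borel_measurable M" "\<And>\<omega>. \<omega> \<in> space M \<Longrightarrow> g \<omega> \<in> K"
    and h: "h \<in> borel_measurable M" "\<And>\<omega>. \<omega> \<in> space M \<Longrightarrow> \<bar>h \<omega>\<bar> \<le> B"
  shows "integrable M (\<lambda>\<omega>. h \<omega> * f (g \<omega>))"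
proof -
  obtain D where D: "\<And>y. y \<in> K \<Longrightarrow> \<bar>f y\<bar> \<le> D"
    using compact_imp_bounded[OF compact_continuous_image[OF f K]]
    by (auto simp: bounded_iff)
  have "AE \<omega> in M. norm (h \<omega> * f (g \<omega>)) \<le> B * D"
    using h(2) D[OF g(2)] by (auto simp: abs_mult intro!: mult_mono order_trans[OF abs_ge_zero])
  moreover have "(\<lambda>\<omega>. h \<omega> * f (g \<omega>)) \<in> borel_measurable M"
    using h(1) borel_measurable_continuous_on_comp[OF f g] by measurable
  ultimately show ?thesis
    by (rule integrable_const_bound)
qed

lemma sum_mult_le_sum_positive:
  fixes x g :: "'i \<Rightarrow> real"
  assumes "finite A" and "\<And>i. i \<in> A \<Longrightarrow> 0 \<le> x i \<and> x i \<le> s"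
  shows "(\<Sum>i\<in>A. x i * g i) \<le> s * (\<Sum>i\<in>{i\<in>A. 0 < g i}. g i)"
proof -
  have "(\<Sum>i\<in>A. x i * g i) \<le> (\<Sum>i\<in>A. if 0 < g i then s * g i else 0)"
    using assms(2) by (intro sum_mono) (auto intro: mult_right_mono mult_nonneg_nonpos)
  also have "\<dots> = s * (\<Sum>i\<in>{i\<in>A. 0 < g i}. g i)"
    using assms(1) by (simp add: sum.inter_filter[symmetric] sum_distrib_left if_distrib)
  finally show ?thesis .
qed

lemma next_slot_less: "0 < T \<Longrightarrow> next_slot T t < T"
  by (simp add: next_slot_def)

lemma prev_slot_less: "0 < T \<Longrightarrow> prev_slot T t < T"
  by (simp add: prev_slot_def)

lemma prev_slot_next_slot: "t < T \<Longrightarrow> prev_slot T (next_slot T t) = t"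
  by (cases "Suc t = T") (simp_all add: prev_slot_def next_slot_def)

lemma next_slot_prev_slot: "t < T \<Longrightarrow> next_slot T (prev_slot T t) = t"
  by (cases t) (simp_all add: prev_slot_def next_slot_def mod_Suc)

lemma bij_betw_next_slot: "0 < T \<Longrightarrow> bij_betw (next_slot T) {..<T} {..<T}"
  by (rule bij_betw_byWitness[where f'="prev_slot T"])
    (auto simp: prev_slot_next_slot next_slot_prev_slot next_slot_less prev_slot_less)

locale proactive_caching = prob_space Pr
  for Pr :: "'a measure" +
  fixes N M T :: nat
    and S :: "nat \<Rightarrow> real"
    and I :: "nat \<Rightarrow> nat \<Rightarrow> nat \<Rightarrow> 'a \<Rightarrow> real"
    and C C' :: "real \<Rightarrow> real"
  assumes T_pos: "0 < T"
    and S_nonneg: "\<And>m. m \<in> {1..M} \<Longrightarrow> 0 \<le> S m"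
    and I_measurable: "\<And>n t m. n < N \<Longrightarrow> t < T \<Longrightarrow> m \<in> {1..M} \<Longrightarrow>
      I n t m \<in> borel_measurable Pr"
    and I_range: "\<And>n t m \<omega>. n < N \<Longrightarrow> t < T \<Longrightarrow> m \<in> {1..M} \<Longrightarrow> \<omega> \<in> space Pr \<Longrightarrow>
      I n t m \<omega> \<in> {0..1}"
    and C_convex: "convex_on {0..} C"
    and C_deriv: "\<And>x. 0 \<le> x \<Longrightarrow> (C has_real_derivative C' x) (at x within {0..})"
    and C'_continuous: "continuous_on {0..} C'"
begin

abbreviation L :: "nat \<Rightarrow> 'a \<Rightarrow> real" where
  "L \<equiv> load N M S I"

definition max_load :: real where
  "max_load = (\<Sum>m=1..M. \<Sum>n<N. S m)"

lemma load_measurable: "t < T \<Longrightarrow> L t \<in> borel_measurable Pr"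
  unfolding load_def
  by (intro borel_measurable_sum borel_measurable_times borel_measurable_const)
    (auto intro: I_measurable)

lemma load_bounds:
  assumes "t < T" and "\<omega> \<in> space Pr"
  shows "L t \<omega> \<in> {0..max_load}"
proof -
  have "S m * I n t m \<omega> \<in> {0..S m}" if "m \<in> {1..M}" "n < N" for m n
    using S_nonneg[OF that(1)] I_range[OF that(2) assms(1) that(1) assms(2)]
    by (auto intro: mult_left_le)
  then show ?thesis
    unfolding load_def max_load_def by (auto intro!: sum_nonneg sum_mono simp del: sum_constant)
qed

lemma C_continuous: "continuous_on {0..} C"
  using C_deriv by (intro DERIV_continuous_on) auto

lemma integrable_comp_load:
  fixes f :: "real \<Rightarrow> real" and h :: "'a \<Rightarrow> real"
  assumes "continuous_on {0..} f" and "t < T"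
    and "h \<in> borel_measurable Pr" and "\<And>\<omega>. \<omega> \<in> space Pr \<Longrightarrow> \<bar>h \<omega>\<bar> \<le> 1"
  shows "integrable Pr (\<lambda>\<omega>. h \<omega> * f (L t \<omega>))"
proof -
  have "continuous_on {0..max_load} f"
    using assms(1) by (rule continuous_on_subset) auto
  then show ?thesis
    using assms(2-4) load_measurable load_bounds
    by (intro integrable_mult_continuous_on_comp[where K="{0..max_load}" and B=1]) auto
qed

lemma integrable_C_load: "t < T \<Longrightarrow> integrable Pr (\<lambda>\<omega>. C (L t \<omega>))"
  using integrable_comp_load[OF C_continuous, of t "\<lambda>_. 1"] by simp

lemma integrable_C'_load: "t < T \<Longrightarrow> integrable Pr (\<lambda>\<omega>. C' (L t \<omega>))"
  using integrable_comp_load[OF C'_continuous, of t "\<lambda>_. 1"] by simp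

lemma integrable_demand_C'_load:
  "n < N \<Longrightarrow> t < T \<Longrightarrow> m \<in> {1..M} \<Longrightarrow> integrable Pr (\<lambda>\<omega>. I n t m \<omega> * C' (L t \<omega>))"
  using I_range by (intro integrable_comp_load[OF C'_continuous] I_measurable) force+

definition marginal_cost :: "nat \<Rightarrow> real" where
  "marginal_cost t = (\<integral>\<omega>. C' (L t \<omega>) \<partial>Pr)"

definition demand_marginal_cost :: "nat \<Rightarrow> nat \<Rightarrow> nat \<Rightarrow> real" where
  "demand_marginal_cost n t m = (\<integral>\<omega>. I n t m \<omega> * C' (L t \<omega>) \<partial>Pr)"

lemma gain_eq:
  assumes "n < N" "t < T" "m \<in> {1..M}"
  shows "gain Pr N M T S I C' n t m = demand_marginal_cost n t m - marginal_cost (prev_slot T t)"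
  unfolding gain_def demand_marginal_cost_def marginal_cost_def
  using integrable_demand_C'_load[OF assms] integrable_C'_load[OF prev_slot_less[OF T_pos]]
  by (rule Bochner_Integration.integral_diff)

definition proactive_load :: "(nat \<Rightarrow> nat \<Rightarrow> nat \<Rightarrow> real) \<Rightarrow> nat \<Rightarrow> 'a \<Rightarrow> real" where
  "proactive_load x t \<omega> =
     L t \<omega> + (\<Sum>m=1..M. \<Sum>n<N. x n (next_slot T t) m - x n t m * I n t m \<omega>)"

lemma proactive_load_eq:
  "proactive_load x t \<omega> = (\<Sum>m=1..M. \<Sum>n<N. (S m - x n t m) * I n t m \<omega> + x n (next_slot T t) m)"
  unfolding proactive_load_def load_def by (simp add: sum.distrib[symmetric] algebra_simps)

lemma proactive_load_bounds:
  assumes x: "feasible_policy N M T S x" and t: "t < T" and \<omega>: "\<omega> \<in> space Pr"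
  shows "proactive_load x t \<omega> \<in> {0..2 * max_load}"
proof -
  have "(S m - x n t m) * I n t m \<omega> + x n (next_slot T t) m \<in> {0..2 * S m}"
    if m: "m \<in> {1..M}" and n: "n < N" for m n
  proof -
    have "x n t m \<in> {0..S m}" "x n (next_slot T t) m \<in> {0..S m}"
      using x n t m next_slot_less[OF T_pos] by (auto simp: feasible_policy_def)
    moreover have "I n t m \<omega> \<in> {0..1}"
      using I_range[OF n t m \<omega>] .
    ultimately show ?thesis
      using mult_left_le[of "I n t m \<omega>" "S m - x n t m"] by auto
  qed
  then show ?thesis
    unfolding proactive_load_eq max_load_def sum_distrib_left
    by (auto intro!: sum_nonneg sum_mono simp del: sum_constant)
qed

lemma proactive_load_measurable: "t < T \<Longrightarrow> proactive_load x t \<in> borel_measurable Pr"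
  unfolding proactive_load_eq
  by (intro borel_measurable_sum borel_measurable_add borel_measurable_times borel_measurable_const)
    (auto intro: I_measurable)

lemma integrable_C_proactive_load:
  assumes x: "feasible_policy N M T S x" and t: "t < T"
  shows "integrable Pr (\<lambda>\<omega>. C (proactive_load x t \<omega>))"
proof -
  have "continuous_on {0..2 * max_load} C"
    using C_continuous by (rule continuous_on_subset) auto
  then show ?thesis
    using integrable_mult_continuous_on_comp[where h="\<lambda>_. 1" and B=1]
      proactive_load_measurable[OF t] proactive_load_bounds[OF x t] by simp
qed

lemma expected_proactive_cost_ge:
  assumes x: "feasible_policy N M T S x" and t: "t < T"
  shows "(\<integral>\<omega>. C (L t \<omega>) \<partial>Pr) + (\<Sum>m=1..M. \<Sum>n<N.
            x n (next_slot T t) m * marginal_cost t - x n t m * demand_marginal_cost n t m)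
    \<le> (\<integral>\<omega>. C (proactive_load x t \<omega>) \<partial>Pr)"
proof -
  define summand where "summand m n \<omega> =
      x n (next_slot T t) m * C' (L t \<omega>) - x n t m * (I n t m \<omega> * C' (L t \<omega>))" for m n \<omega>
  define tangent where "tangent \<omega> = C (L t \<omega>) + (\<Sum>m=1..M. \<Sum>n<N. summand m n \<omega>)" for \<omega>
  have integrable_summand: "integrable Pr (summand m n)"
    and integral_summand: "(\<integral>\<omega>. summand m n \<omega> \<partial>Pr)
      = x n (next_slot T t) m * marginal_cost t - x n t m * demand_marginal_cost n t m"
    if "m \<in> {1..M}" "n < N" for m n
    using integrable_C'_load[OF t] integrable_demand_C'_load[OF that(2) t that(1)]
    unfolding summand_def[abs_def] marginal_cost_def demand_marginal_cost_def by simp_all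
  have integrable_sums: "integrable Pr (\<lambda>\<omega>. \<Sum>m=1..M. \<Sum>n<N. summand m n \<omega>)"
    using integrable_summand by (intro Bochner_Integration.integrable_sum) auto
  have "(\<integral>\<omega>. tangent \<omega> \<partial>Pr)
      = (\<integral>\<omega>. C (L t \<omega>) \<partial>Pr) + (\<integral>\<omega>. (\<Sum>m=1..M. \<Sum>n<N. summand m n \<omega>) \<partial>Pr)"
    unfolding tangent_def by (rule Bochner_Integration.integral_add[OF integrable_C_load[OF t] integrable_sums])
  also have "(\<integral>\<omega>. (\<Sum>m=1..M. \<Sum>n<N. summand m n \<omega>) \<partial>Pr)
      = (\<Sum>m=1..M. \<integral>\<omega>. (\<Sum>n<N. summand m n \<omega>) \<partial>Pr)"
    using integrable_summand
    by (intro Bochner_Integration.integral_sum Bochner_Integration.integrable_sum) auto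
  also have "\<dots> = (\<Sum>m=1..M. \<Sum>n<N. \<integral>\<omega>. summand m n \<omega> \<partial>Pr)"
    using integrable_summand by (intro sum.cong refl Bochner_Integration.integral_sum) auto
  finally have integral_tangent: "(\<integral>\<omega>. tangent \<omega> \<partial>Pr) = (\<integral>\<omega>. C (L t \<omega>) \<partial>Pr) + (\<Sum>m=1..M. \<Sum>n<N.
      x n (next_slot T t) m * marginal_cost t - x n t m * demand_marginal_cost n t m)"
    by (simp add: integral_summand)
  have "(\<integral>\<omega>. tangent \<omega> \<partial>Pr) \<le> (\<integral>\<omega>. C (proactive_load x t \<omega>) \<partial>Pr)"
  proof (rule integral_mono)
    show "integrable Pr tangent"
      unfolding tangent_def using integrable_C_load[OF t] integrable_sums by simp
    show "integrable Pr (\<lambda>\<omega>. C (proactive_load x t \<omega>))"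
      using integrable_C_proactive_load[OF x t] .
    fix \<omega> assume \<omega>: "\<omega> \<in> space Pr"
    have "tangent \<omega> = C (L t \<omega>) + C' (L t \<omega>) * (proactive_load x t \<omega> - L t \<omega>)"
      unfolding tangent_def summand_def proactive_load_def by (simp add: sum_distrib_left algebra_simps)
    then show "tangent \<omega> \<le> C (proactive_load x t \<omega>)"
      using convex_on_above_tangent_within[OF C_convex _ _ C_deriv, of "L t \<omega>" "proactive_load x t \<omega>"]
        load_bounds[OF t \<omega>] proactive_load_bounds[OF x t \<omega>] by simp
  qed
  then show ?thesis
    unfolding integral_tangent .
qed

lemma sum_next_slot_marginal_cost:
  "(\<Sum>t<T. \<Sum>m=1..M. \<Sum>n<N. x n (next_slot T t) m * marginal_cost t)
     = (\<Sum>t<T. \<Sum>m=1..M. \<Sum>n<N. x n t m * marginal_cost (prev_slot T t))"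
proof -
  define F where "F t = (\<Sum>m=1..M. \<Sum>n<N. x n t m * marginal_cost (prev_slot T t))" for t
  have "(\<Sum>t<T. F (next_slot T t)) = (\<Sum>t<T. F t)"
    by (rule sum.reindex_bij_betw[OF bij_betw_next_slot[OF T_pos]])
  then show ?thesis
    by (simp add: F_def prev_slot_next_slot)
qed

lemma proactive_objective_ge:
  assumes x: "feasible_policy N M T S x"
  shows "cost_nonproactive Pr N M T S I C
      - (1 / real T) * (\<Sum>t<T. \<Sum>m=1..M. \<Sum>n<N. x n t m * gain Pr N M T S I C' n t m)
    \<le> proactive_objective Pr N M T S I C x"
proof -
  have "(\<Sum>t<T. \<Sum>m=1..M. \<Sum>n<N. x n t m * gain Pr N M T S I C' n t m)
      = (\<Sum>t<T. \<Sum>m=1..M. \<Sum>n<N. x n t m * demand_marginal_cost n t m)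
        - (\<Sum>t<T. \<Sum>m=1..M. \<Sum>n<N. x n (next_slot T t) m * marginal_cost t)"
    unfolding sum_next_slot_marginal_cost sum_subtractf[symmetric]
    by (intro sum.cong refl) (simp add: gain_eq right_diff_distrib)
  moreover have "(\<Sum>t<T. (\<integral>\<omega>. C (L t \<omega>) \<partial>Pr) + (\<Sum>m=1..M. \<Sum>n<N.
            x n (next_slot T t) m * marginal_cost t - x n t m * demand_marginal_cost n t m))
      \<le> (\<Sum>t<T. \<integral>\<omega>. C (proactive_load x t \<omega>) \<partial>Pr)"
    using expected_proactive_cost_ge[OF x] by (intro sum_mono) auto
  ultimately have "(\<Sum>t<T. \<integral>\<omega>. C (L t \<omega>) \<partial>Pr)
      - (\<Sum>t<T. \<Sum>m=1..M. \<Sum>n<N. x n t m * gain Pr N M T S I C' n t m)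
    \<le> (\<Sum>t<T. \<integral>\<omega>. C (proactive_load x t \<omega>) \<partial>Pr)"
    by (simp add: sum.distrib sum_subtractf)
  then show ?thesis
    unfolding cost_nonproactive_def proactive_objective_def proactive_load_def[abs_def]
    by (simp add: diff_divide_distrib[symmetric] divide_right_mono)
qed

lemma weighted_gain_le_active_gain:
  assumes "feasible_policy N M T S x" and "t < T" and "m \<in> {1..M}"
  shows "(\<Sum>n<N. x n t m * gain Pr N M T S I C' n t m)
    \<le> S m * (\<Sum>n\<in>active_users Pr N M T S I C' t m. gain Pr N M T S I C' n t m)"
proof -
  have active: "active_users Pr N M T S I C' t m = {n\<in>{..<N}. 0 < gain Pr N M T S I C' n t m}"
    by (auto simp: active_users_def)
  show ?thesis
    unfolding active
    by (rule sum_mult_le_sum_positive) (use assms in \<open>auto simp: feasible_policy_def\<close>)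
qed

theorem cost_reduction_le:
  "cost_reduction Pr N M T S I C
     \<le> (1 / real T) * (\<Sum>t<T. \<Sum>m=1..M.
           S m * (\<Sum>n\<in>active_users Pr N M T S I C' t m. gain Pr N M T S I C' n t m))"
    (is "_ \<le> ?bound")
proof -
  have "cost_nonproactive Pr N M T S I C - ?bound \<le> proactive_objective Pr N M T S I C x"
    if x: "feasible_policy N M T S x" for x
  proof -
    have "(\<Sum>t<T. \<Sum>m=1..M. \<Sum>n<N. x n t m * gain Pr N M T S I C' n t m)
        \<le> (\<Sum>t<T. \<Sum>m=1..M.
             S m * (\<Sum>n\<in>active_users Pr N M T S I C' t m. gain Pr N M T S I C' n t m))"
      using weighted_gain_le_active_gain[OF x] by (intro sum_mono) auto
    then have "(1 / real T) * (\<Sum>t<T. \<Sum>m=1..M. \<Sum>n<N. x n t m * gain Pr N M T S I C' n t m)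
        \<le> ?bound"
      by (rule mult_left_mono) simp
    then show ?thesis
      using proactive_objective_ge[OF x] by linarith
  qed
  moreover have "feasible_policy N M T S (\<lambda>_ _ _. 0)"
    using S_nonneg by (auto simp: feasible_policy_def)
  ultimately have "cost_nonproactive Pr N M T S I C - ?bound \<le> cost_proactive Pr N M T S I C"
    unfolding cost_proactive_def by (intro cInf_greatest) auto
  then show ?thesis
    unfolding cost_reduction_def by simp
qed

end

theorem lemma2:
  fixes Pr :: "'a measure"
    and N M T :: nat
    and S :: "nat \<Rightarrow> real"
    and P :: "nat \<Rightarrow> nat \<Rightarrow> nat \<Rightarrow> real"
    and I :: "nat \<Rightarrow> nat \<Rightarrow> nat \<Rightarrow> 'a \<Rightarrow> real"
    and C C' :: "real \<Rightarrow> real"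
  assumes prob: "prob_space Pr"
    and T_pos: "0 < T"
    and S_pos: "\<forall>m\<in>{1..M}. 0 < S m"
    and P_nonneg: "\<forall>n<N. \<forall>t<T. \<forall>m\<in>{1..M}. 0 \<le> P n t m"
    and P_sum: "\<forall>n<N. \<forall>t<T. (\<Sum>m=1..M. P n t m) \<le> 1"
    and I_meas: "\<forall>n<N. \<forall>t<T. \<forall>m\<in>{1..M}. I n t m \<in> borel_measurable Pr"
    and I_01: "\<forall>n<N. \<forall>t<T. \<forall>m\<in>{1..M}. \<forall>\<omega>\<in>space Pr. I n t m \<omega> \<in> {0, 1}"
    and I_prob: "\<forall>n<N. \<forall>t<T. \<forall>m\<in>{1..M}.
                   measure Pr {\<omega>\<in>space Pr. I n t m \<omega> = 1} = P n t m"
    and I_one: "\<forall>n<N. \<forall>t<T. \<forall>\<omega>\<in>space Pr. (\<Sum>m=1..M. I n t m \<omega>) \<le> 1"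
    and I_indep: "\<forall>t<T. \<forall>n<N. \<forall>k<N. n \<noteq> k \<longrightarrow>
                   prob_space.indep_var Pr
                     (Pi\<^sub>M {1..M} (\<lambda>_. borel)) (\<lambda>\<omega>. \<lambda>m\<in>{1..M}. I n t m \<omega>)
                     (Pi\<^sub>M {1..M} (\<lambda>_. borel)) (\<lambda>\<omega>. \<lambda>m\<in>{1..M}. I k t m \<omega>)"
    and C_nonneg: "\<forall>x\<ge>0. 0 \<le> C x"
    and C_smooth: "\<exists>D :: nat \<Rightarrow> real \<Rightarrow> real. D 0 = C \<and> D 1 = C' \<and>
                     (\<forall>k. \<forall>x\<ge>0. (D k has_real_derivative D (Suc k) x) (at x within {0..}))"
    and C_strict_convex: "strictly_convex_on {0..} C"
    and C_mono: "mono_on {0..} C"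
  shows "cost_reduction Pr N M T S I C
           \<le> (1 / real T) * (\<Sum>t<T. \<Sum>m=1..M.
                 S m * (\<Sum>n\<in>active_users Pr N M T S I C' t m. gain Pr N M T S I C' n t m))"
proof -
  obtain D :: "nat \<Rightarrow> real \<Rightarrow> real" where D: "D 0 = C" "D 1 = C'"
    and D_deriv: "\<And>k x. 0 \<le> x \<Longrightarrow> (D k has_real_derivative D (Suc k) x) (at x within {0..})"
    using C_smooth by blast
  have C'_continuous: "continuous_on {0..} C'"
    using D_deriv[of _ 1] D(2) by (intro DERIV_continuous_on) auto
  have "proactive_caching Pr N M T S I C C'"
  proof (intro proactive_caching.intro[OF prob] proactive_caching_axioms.intro)
    show "(C has_real_derivative C' x) (at x within {0..})" if "0 \<le> x" for x
      using D_deriv[OF that, of 0] D by simp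
    show "I n t m \<omega> \<in> {0..1}" if "n < N" "t < T" "m \<in> {1..M}" "\<omega> \<in> space Pr" for n t m \<omega>
      using I_01 that by fastforce
  qed (use prob T_pos S_pos I_meas C'_continuous strictly_convex_on_imp_convex_on[OF C_strict_convex]
      in \<open>simp_all add: less_imp_le\<close>)
  then show ?thesis
    by (rule proactive_caching.cost_reduction_le)
qed

end
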